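(* Let $m$ be a positive integer with $m\neq2^\beta$ for every integer $\beta\ge0$, let $T=2^{\lceil\lg m\rceil}-m-1$, and let $i\ge0$ be an integer. If $\varepsilon$ is a real number with $\frac{T+1}{2}+\frac{im}{2}\le\varepsilon<\frac{T+1}{2}+\frac{(i+1)m}{2}$, then $\ell_m(\varepsilon)=2+i+\lfloor\lg m\rfloor$.
   Context: $\lg$ denotes $\log_2$. The generalized Rice mapping $M:\mathbb{R}\to\mathbb{Z}_{\ge0}$ is $M(\varepsilon)=\lfloor 2\varepsilon\rfloor$ if $\varepsilon\ge0$ and $M(\varepsilon)=-\lfloor2\varepsilon\rfloor-1$ if $\varepsilon<0$. For a positive integer $m$, the Golomb codeword of a non-negative integer $N$ consists of $j=\lfloor N/m\rfloor$ in unary ($j+1$ bits) followed by $k=N\bmod m$ in minimal binary, which uses $\lfloor\lg m\rfloor$ bits if $k<2^{\lceil\lg m\rceil}-m$ and $\lceil\lg m\rceil$ bits otherwise; $\lambda_m(N)$ is the total number of bits. The code length of a real residual $\varepsilon$ is $\ell_m(\varepsilon)=\lambda_m(M(\varepsilon))$. *)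

theory Defs
  imports Complex_Main
begin

definition rice_map :: "real \<Rightarrow> nat" where
  "rice_map \<epsilon> = (if \<epsilon> \<ge> 0 then nat \<lfloor>2 * \<epsilon>\<rfloor> else nat (- \<lfloor>2 * \<epsilon>\<rfloor> - 1))"

definition flg :: "nat \<Rightarrow> nat" where
  "flg m = nat \<lfloor>log 2 (real m)\<rfloor>"

definition clg :: "nat \<Rightarrow> nat" where
  "clg m = nat \<lceil>log 2 (real m)\<rceil>"

definition golomb_len :: "nat \<Rightarrow> nat \<Rightarrow> nat" where
  "golomb_len m N = (let j = N div m; k = N mod m in
     (j + 1) + (if k < 2 ^ clg m - m then flg m else clg m))"

definition code_len :: "nat \<Rightarrow> real \<Rightarrow> nat" where
  "code_len m \<epsilon> = golomb_len m (rice_map \<epsilon>)"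

end

theory Submission
  imports Defs
begin

text \<open>With \<open>f = \<lfloor>lg m\<rfloor>\<close> and \<open>A = 2^(f+1) - m = T + 1\<close>, the interval for \<open>\<epsilon>\<close> says exactly
  that \<open>N = M(\<epsilon>) = \<lfloor>2\<epsilon>\<rfloor>\<close> lies in \<open>[A + i m, A + (i+1) m)\<close>. Such an \<open>N\<close> either falls in
  block \<open>i\<close> with remainder \<open>\<ge> A\<close> (unary part \<open>i + 1\<close>, long binary part \<open>f + 1\<close>) or in
  block \<open>i + 1\<close> with remainder \<open>< A\<close> (unary part \<open>i + 2\<close>, short binary part \<open>f\<close>); both
  give \<open>i + f + 2\<close> bits.\<close>

lemma flg_eq:
  assumes "2 ^ f \<le> m" "m < 2 ^ Suc f"
  shows "flg m = f"
proof -
  have "\<lfloor>log 2 (real m)\<rfloor> = int f"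
    using floor_log_nat_eq_powr_iff[of 2 m f] assms by (simp add: powr_realpow)
  then show ?thesis unfolding flg_def by simp
qed

lemma clg_eq:
  assumes "2 ^ f < m" "m \<le> 2 ^ Suc f"
  shows "clg m = Suc f"
proof -
  have "\<lceil>log 2 (real m)\<rceil> = int f + 1"
    using ceiling_log_nat_eq_powr_iff[of 2 m f] assms by simp
  then show ?thesis unfolding clg_def by simp
qed

lemma rice_map_nonneg:
  assumes "0 \<le> \<epsilon>"
  shows "int (rice_map \<epsilon>) = \<lfloor>2 * \<epsilon>\<rfloor>"
  using assms unfolding rice_map_def by simp

lemma golomb_len_mult_add:
  assumes "k < m"
  shows "golomb_len m (j * m + k) = Suc j + (if k < 2 ^ clg m - m then flg m else clg m)"
  using assms unfolding golomb_len_def Let_def by simp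

lemma golomb_len_shifted_block:
  assumes clg: "clg m = Suc (flg m)" and short: "2 ^ clg m \<le> 2 * m"
    and lo: "2 ^ clg m - m + i * m \<le> N" and hi: "N < 2 ^ clg m - m + Suc i * m"
  shows "golomb_len m N = 2 + i + flg m"
proof -
  define A where "A = 2 ^ clg m - m"
  define r where "r = N - (A + i * m)"
  have N: "N = A + i * m + r" and "r < m"
    using lo hi unfolding r_def A_def by auto
  show ?thesis
  proof (cases "A + r < m")
    case True
    have "N = i * m + (A + r)" using N by simp
    with True have "golomb_len m N = Suc i + clg m"
      using golomb_len_mult_add[of "A + r" m i] by (simp add: A_def)
    then show ?thesis using clg by simp
  next
    case False
    define k where "k = A + r - m"
    have "A \<le> m" using short unfolding A_def by simp
    then have "k < A" "k < m" "N = Suc i * m + k"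
      using N \<open>r < m\<close> False unfolding k_def by auto
    then show ?thesis
      using golomb_len_mult_add[of k m "Suc i", folded A_def] by simp
  qed
qed

theorem lemma1:
  fixes m i :: nat and \<epsilon> :: real and T :: int
  assumes "m > 0"
    and "\<forall>\<beta>::nat. m \<noteq> 2 ^ \<beta>"
    and "T = 2 ^ clg m - int m - 1"
    and "(real_of_int T + 1) / 2 + real i * real m / 2 \<le> \<epsilon>"
    and "\<epsilon> < (real_of_int T + 1) / 2 + real (i + 1) * real m / 2"
  shows "code_len m \<epsilon> = 2 + i + flg m"
proof -
  obtain f where "2 ^ f \<le> m" "m < 2 ^ Suc f"
    using ex_power_ivl1[of 2 m] assms(1) by auto
  moreover have "2 ^ f \<noteq> m" using assms(2) by blast
  ultimately have flg: "flg m = f" and clg: "clg m = Suc f"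
    using flg_eq clg_eq by auto
  define A where "A = 2 ^ clg m - m"
  have "real_of_int T + 1 = real A"
    using assms(3) clg \<open>m < 2 ^ Suc f\<close> unfolding A_def by (simp add: of_nat_diff)
  then have lo: "real (A + i * m) \<le> 2 * \<epsilon>" and hi: "2 * \<epsilon> < real (A + Suc i * m)"
    using assms(4,5) by (simp_all add: field_simps)
  then have N: "int (rice_map \<epsilon>) = \<lfloor>2 * \<epsilon>\<rfloor>"
    by (intro rice_map_nonneg) linarith
  have "A + i * m \<le> rice_map \<epsilon>" "rice_map \<epsilon> < A + Suc i * m"
  proof -
    have "int (A + i * m) \<le> \<lfloor>2 * \<epsilon>\<rfloor>" "\<lfloor>2 * \<epsilon>\<rfloor> < int (A + Suc i * m)"
      using lo hi by (simp_all only: le_floor_iff floor_less_iff of_int_of_nat_eq)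
    then show "A + i * m \<le> rice_map \<epsilon>" "rice_map \<epsilon> < A + Suc i * m"
      using N by linarith+
  qed
  moreover have "2 ^ clg m \<le> 2 * m" using clg \<open>2 ^ f \<le> m\<close> by simp
  ultimately show ?thesis
    unfolding code_len_def using golomb_len_shifted_block clg flg A_def by simp
qed

end
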